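(* Let $\varepsilon>0$ and $c>0$ be constants, and let $\ell=\ell(n)$ be integers with $0\le \ell\le C_0 n^{1/2-\varepsilon}$ for some constant $C_0$. Then there is a constant $m$ (depending only on $\varepsilon,c$) such that, for all sufficiently large $n$, there is a randomized procedure $s$ with the following properties: on input $x\in\{0,1\}^n$ it queries $\mathrm{Jump}_\ell$ at $x$ and at at most $m$ further points, each sampled independently from a unary unbiased distribution applied to $x$; its output $s(x)$ depends only on the observed fitness values (and $n,\ell$); and for every $x\in\{0,1\}^n$, $\Pr[s(x)=|x|_1]\ge 1-O(n^{-c})$.
   Context: For $x\in\{0,1\}^n$ let $|x|_1=\sum_i x_i$. For an integer $0\le\ell<n/2$, $\mathrm{Jump}_\ell:\{0,1\}^n\to\mathbb{R}$ is defined by $\mathrm{Jump}_\ell(x)=n$ if $|x|_1=n$, $\mathrm{Jump}_\ell(x)=|x|_1$ if $\ell<|x|_1<n-\ell$, and $\mathrm{Jump}_\ell(x)=0$ otherwise. A unary unbiased distribution is a family $(D(\cdot\mid y))_{y\in\{0,1\}^n}$ of probability distributions on $\{0,1\}^n$ with $D(x\mid y)=D(x\oplus z\mid y\oplus z)$ for all $x,y,z$ ($\oplus$ = bitwise XOR) and $D(x\mid y)=D(\sigma(x)\mid\sigma(y))$ for all permutations $\sigma$ of $[n]$, where $\sigma(x)=x_{\sigma(1)}\cdots x_{\sigma(n)}$. *)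

theory Defs
  imports "HOL-Probability.Probability" "HOL-Combinatorics.Permutations"
begin

definition cube :: "nat \<Rightarrow> bool list set" where
  "cube n = {x. length x = n}"

definition weight :: "bool list \<Rightarrow> nat" where
  "weight x = length (filter id x)"

definition jump :: "nat \<Rightarrow> nat \<Rightarrow> bool list \<Rightarrow> real" where
  "jump n l x = (if weight x = n then real n
                 else if l < weight x \<and> weight x < n - l then real (weight x) else 0)"

definition xorl :: "bool list \<Rightarrow> bool list \<Rightarrow> bool list" where
  "xorl x z = map2 (\<noteq>) x z"

text \<open>sigma(x) = x_sigma(1) ... x_sigma(n) (0-indexed here).\<close>
definition perm_bits :: "(nat \<Rightarrow> nat) \<Rightarrow> bool list \<Rightarrow> bool list" where
  "perm_bits \<sigma> x = map (\<lambda>i. x ! \<sigma> i) [0..<length x]"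

text \<open>A unary unbiased distribution on {0,1}^n: D y is the distribution D(. | y).\<close>
definition unary_unbiased :: "nat \<Rightarrow> (bool list \<Rightarrow> bool list pmf) \<Rightarrow> bool" where
  "unary_unbiased n D \<longleftrightarrow>
     (\<forall>y\<in>cube n. set_pmf (D y) \<subseteq> cube n) \<and>
     (\<forall>x\<in>cube n. \<forall>y\<in>cube n. \<forall>z\<in>cube n.
         pmf (D y) x = pmf (D (xorl y z)) (xorl x z)) \<and>
     (\<forall>\<sigma>. \<sigma> permutes {..<n} \<longrightarrow> (\<forall>x\<in>cube n. \<forall>y\<in>cube n.
         pmf (D y) x = pmf (D (perm_bits \<sigma> y)) (perm_bits \<sigma> x)))"

fun samples :: "(nat \<Rightarrow> 'a pmf) \<Rightarrow> nat \<Rightarrow> 'a list pmf" where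
  "samples P 0 = return_pmf []"
| "samples P (Suc k) =
     bind_pmf (samples P k) (\<lambda>ys. bind_pmf (P k) (\<lambda>y. return_pmf (ys @ [y])))"

definition run :: "nat \<Rightarrow> nat \<Rightarrow> nat \<Rightarrow> (nat \<Rightarrow> bool list \<Rightarrow> bool list pmf)
                    \<Rightarrow> (real list \<Rightarrow> nat) \<Rightarrow> bool list \<Rightarrow> nat pmf" where
  "run n l m D g x =
     map_pmf (\<lambda>ys. g (jump n l x # map (jump n l) ys)) (samples (\<lambda>i. D i x) m)"

end

theory Submission
  imports Defs
begin

(* Let k = 2l + 1 and let every sample flip exactly k uniformly random
   bits of x; this operator is unary unbiased.  If l < |x| < n - l, Jump already reveals |x|.
   If |x| <= l, a flip set that avoids the ones of x produces a string of weight |x| + k,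
   which lies in the visible middle band; every sample has weight at most |x| + k, so the
   largest observed value is |x| + k as soon as one such sample occurs, and we output it
   minus k.  Symmetrically, if |x| >= n - l, a flip set avoiding the zeros gives |x| - k,
   the smallest nonzero observed value, and we output it plus k.  A uniform k-set meets a
   fixed set of size <= l with probability <= l k / n <= 3 l^2 / n, so all m independent
   samples fail with probability <= (3 l^2 / n)^m = O(n^(-c)) once m >= c / (2 eps). *)

section \<open>Independent samples\<close>

lemma samples_Suc_pair:
  "samples P (Suc k) = map_pmf (\<lambda>(ys, y). ys @ [y]) (pair_pmf (samples P k) (P k))"
  by (simp add: pair_pmf_def map_bind_pmf map_return_pmf bind_assoc_pmf bind_return_pmf)

lemma set_pmf_samples:
  "ys \<in> set_pmf (samples (\<lambda>_. Q) m) \<Longrightarrow> set ys \<subseteq> set_pmf Q"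
  by (induction m arbitrary: ys) (fastforce simp: set_bind_pmf)+

lemma prob_samples_all_bad:
  fixes Q :: "'a::countable pmf"
  assumes "measure_pmf.prob Q {y. B y} \<le> p"
  shows "measure_pmf.prob (samples (\<lambda>_. Q) m) {ys. \<forall>y\<in>set ys. B y} \<le> p ^ m"
proof (induction m)
  case 0
  then show ?case by simp
next
  case (Suc m)
  have p_nonneg: "0 \<le> p" using assms measure_nonneg order_trans by blast
  have "(\<lambda>(ys, y). ys @ [y]) -` {ys. \<forall>y\<in>set ys. B y} = {ys. \<forall>y\<in>set ys. B y} \<times> {y. B y}"
    by auto
  then have "measure_pmf.prob (samples (\<lambda>_. Q) (Suc m)) {ys. \<forall>y\<in>set ys. B y}
      = measure_pmf.prob (samples (\<lambda>_. Q) m) {ys. \<forall>y\<in>set ys. B y} * measure_pmf.prob Q {y. B y}"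
    by (simp only: samples_Suc_pair measure_map_pmf)
      (rule measure_pmf_prob_product; simp)
  also have "\<dots> \<le> p ^ m * p"
    by (rule mult_mono[OF Suc assms]) (auto simp: p_nonneg)
  finally show ?case by (simp add: mult.commute)
qed

lemma prob_samples_some_good:
  fixes Q :: "'a::countable pmf"
  assumes bad: "measure_pmf.prob Q {y. \<not> G y} \<le> p"
    and correct: "\<And>ys y. set ys \<subseteq> set_pmf Q \<Longrightarrow> y \<in> set ys \<Longrightarrow> G y \<Longrightarrow> h ys = v"
  shows "measure_pmf.prob (samples (\<lambda>_. Q) m) (h -` {v}) \<ge> 1 - p ^ m"
proof -
  let ?M = "samples (\<lambda>_. Q) m"
  let ?Good = "{ys. \<exists>y\<in>set ys. G y}"
  have "- ?Good = {ys. \<forall>y\<in>set ys. \<not> G y}" by auto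
  then have "1 - p ^ m \<le> 1 - measure_pmf.prob ?M (- ?Good)"
    using prob_samples_all_bad[OF bad] by simp
  also have "\<dots> = measure_pmf.prob ?M ?Good"
    using measure_pmf.prob_compl[of "- ?Good" ?M] by simp
  also have "\<dots> = measure_pmf.prob ?M (?Good \<inter> set_pmf ?M)"
    by (simp add: measure_Int_set_pmf)
  also have "\<dots> \<le> measure_pmf.prob ?M (h -` {v})"
  proof (rule measure_pmf.finite_measure_mono)
    show "?Good \<inter> set_pmf ?M \<subseteq> h -` {v}"
      using set_pmf_samples[of _ Q m] correct by blast
  qed simp
  finally show ?thesis .
qed

section \<open>Flipping exactly k uniformly random bits\<close>

definition flip :: "nat set \<Rightarrow> bool list \<Rightarrow> bool list" where
  "flip S y = map (\<lambda>i. y ! i \<noteq> (i \<in> S)) [0..<length y]"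

definition k_subsets :: "nat \<Rightarrow> nat \<Rightarrow> nat set set" where
  "k_subsets n k = {S. S \<subseteq> {..<n} \<and> card S = k}"

definition flip_k :: "nat \<Rightarrow> nat \<Rightarrow> bool list \<Rightarrow> bool list pmf" where
  "flip_k n k y = map_pmf (\<lambda>S. flip S y) (pmf_of_set (k_subsets n k))"

definition diff_pos :: "nat \<Rightarrow> bool list \<Rightarrow> bool list \<Rightarrow> nat set" where
  "diff_pos n y x = {i. i < n \<and> y ! i \<noteq> x ! i}"

lemma finite_k_subsets: "finite (k_subsets n k)"
  unfolding k_subsets_def by (rule finite_subset[of _ "Pow {..<n}"]) auto

lemma k_subsets_nonempty: "k \<le> n \<Longrightarrow> k_subsets n k \<noteq> {}"
  unfolding k_subsets_def
  by (metis (mono_tags, lifting) card_lessThan empty_iff lessThan_subset_iff mem_Collect_eq)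

lemma card_k_subsets: "card (k_subsets n k) = n choose k"
  unfolding k_subsets_def using n_subsets[of "{..<n}" k] by simp

lemma length_flip [simp]: "length (flip S y) = length y"
  by (simp add: flip_def)

lemma nth_flip [simp]: "i < length y \<Longrightarrow> flip S y ! i = (y ! i \<noteq> (i \<in> S))"
  by (simp add: flip_def)

lemma set_pmf_flip_k: "k \<le> n \<Longrightarrow> y \<in> set_pmf (flip_k n k x) \<Longrightarrow> \<exists>S\<in>k_subsets n k. y = flip S x"
  using finite_k_subsets k_subsets_nonempty by (auto simp: flip_k_def)

lemma flip_eq_iff:
  assumes "S \<subseteq> {..<n}" "length y = n" "length x = n"
  shows "flip S y = x \<longleftrightarrow> S = diff_pos n y x"
proof
  assume flip: "flip S y = x"
  show "S = diff_pos n y x"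
  proof (intro set_eqI iffI)
    fix i assume "i \<in> S"
    with assms flip show "i \<in> diff_pos n y x" by (auto simp: diff_pos_def)
  next
    fix i assume "i \<in> diff_pos n y x"
    with assms flip show "i \<in> S" by (auto simp: diff_pos_def)
  qed
next
  assume "S = diff_pos n y x"
  then show "flip S y = x"
    using assms by (intro nth_equalityI) (auto simp: diff_pos_def)
qed

lemma pmf_flip_k:
  assumes "k \<le> n" "length y = n" "length x = n"
  shows "pmf (flip_k n k y) x = (if card (diff_pos n y x) = k then 1 / card (k_subsets n k) else 0)"
proof -
  have diff_sub: "diff_pos n y x \<subseteq> {..<n}" by (auto simp: diff_pos_def)
  have "k_subsets n k \<inter> (\<lambda>S. flip S y) -` {x}
        = (if card (diff_pos n y x) = k then {diff_pos n y x} else {})"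
  proof (cases "card (diff_pos n y x) = k")
    case True
    then show ?thesis using flip_eq_iff[OF _ assms(2,3)] diff_sub by (auto simp: k_subsets_def)
  next
    case False
    have "S \<notin> k_subsets n k" if "flip S y = x" for S
      using that False flip_eq_iff[OF _ assms(2,3), of S] by (auto simp: k_subsets_def)
    then show ?thesis using False by auto
  qed
  then show ?thesis
    unfolding flip_k_def pmf_map using finite_k_subsets k_subsets_nonempty[OF assms(1)]
    by (simp add: measure_pmf_of_set)
qed

lemma diff_pos_xorl:
  assumes "length x = n" "length y = n" "length z = n"
  shows "diff_pos n (xorl y z) (xorl x z) = diff_pos n y x"
  using assms by (auto simp: diff_pos_def xorl_def)

lemma card_diff_pos_perm_bits:
  assumes \<sigma>: "\<sigma> permutes {..<n}" and "length x = n" "length y = n"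
  shows "card (diff_pos n (perm_bits \<sigma> y) (perm_bits \<sigma> x)) = card (diff_pos n y x)"
proof -
  have "diff_pos n (perm_bits \<sigma> y) (perm_bits \<sigma> x) = {i. i < n \<and> y ! \<sigma> i \<noteq> x ! \<sigma> i}"
    using assms(2,3) by (auto simp: diff_pos_def perm_bits_def)
  also have "\<dots> = \<sigma> -` diff_pos n y x"
    using permutes_in_image[OF \<sigma>] by (auto simp: diff_pos_def)
  finally show ?thesis
    by (simp add: card_vimage_inj permutes_inj[OF \<sigma>] permutes_surj[OF \<sigma>])
qed

text \<open>Since its transition probabilities depend only on the Hamming distance, flipping k
  uniformly random bits is a unary unbiased operator.\<close>
lemma flip_k_unary_unbiased:
  assumes "k \<le> n"
  shows "unary_unbiased n (flip_k n k)"
  unfolding unary_unbiased_def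
proof (intro conjI ballI allI impI)
  fix y assume "y \<in> cube n"
  then show "set_pmf (flip_k n k y) \<subseteq> cube n" by (auto simp: flip_k_def cube_def)
next
  fix x y z assume "x \<in> cube n" "y \<in> cube n" "z \<in> cube n"
  moreover have "length (xorl y z) = n" "length (xorl x z) = n"
    using calculation by (auto simp: xorl_def cube_def)
  ultimately show "pmf (flip_k n k y) x = pmf (flip_k n k (xorl y z)) (xorl x z)"
    using assms by (simp add: cube_def pmf_flip_k diff_pos_xorl)
next
  fix \<sigma> x y assume "\<sigma> permutes {..<n}" "x \<in> cube n" "y \<in> cube n"
  moreover have "length (perm_bits \<sigma> y) = n" "length (perm_bits \<sigma> x) = n"
    using calculation by (auto simp: perm_bits_def cube_def)
  ultimately show "pmf (flip_k n k y) x = pmf (flip_k n k (perm_bits \<sigma> y)) (perm_bits \<sigma> x)"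
    using assms by (simp add: cube_def pmf_flip_k card_diff_pos_perm_bits)
qed

section \<open>Uniform k-sets rarely hit a small set\<close>

text \<open>The k-subsets containing a fixed i correspond to the (k-1)-subsets of the rest.\<close>
lemma card_k_subsets_containing:
  assumes "i < n" "1 \<le> k"
  shows "card {S \<in> k_subsets n k. i \<in> S} = (n - 1) choose (k - 1)"
proof -
  let ?R = "{T. T \<subseteq> {..<n} - {i} \<and> card T = k - 1}"
  have "{S \<in> k_subsets n k. i \<in> S} = insert i ` ?R"
  proof (intro set_eqI iffI)
    fix S assume "S \<in> {S \<in> k_subsets n k. i \<in> S}"
    then have S: "S \<subseteq> {..<n}" "card S = k" "i \<in> S" by (auto simp: k_subsets_def)
    then have "finite S" using finite_subset by blast
    with S have "S - {i} \<in> ?R" by (auto simp: card_Diff_singleton)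
    moreover have "S = insert i (S - {i})" using S by auto
    ultimately show "S \<in> insert i ` ?R" by blast
  next
    fix S assume "S \<in> insert i ` ?R"
    then obtain T where T: "T \<subseteq> {..<n} - {i}" "card T = k - 1" "S = insert i T" by auto
    then have "finite T" "i \<notin> T" using finite_subset[OF T(1)] by auto
    with T assms show "S \<in> {S \<in> k_subsets n k. i \<in> S}" by (auto simp: k_subsets_def)
  qed
  moreover have "inj_on (insert i) ?R"
    by (rule inj_on_subset[of _ "Pow ({..<n} - {i})"]) (auto simp: inj_on_def)
  ultimately have "card {S \<in> k_subsets n k. i \<in> S} = card ?R" by (simp add: card_image)
  also have "\<dots> = (n - 1) choose (k - 1)" using n_subsets[of "{..<n} - {i}"] assms by simp
  finally show ?thesis .
qed

lemma prob_k_subset_contains: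
  assumes "i < n" "1 \<le> k" "k \<le> n"
  shows "measure_pmf.prob (pmf_of_set (k_subsets n k)) {S. i \<in> S} = real k / real n"
proof -
  have "measure_pmf.prob (pmf_of_set (k_subsets n k)) {S. i \<in> S}
      = real ((n - 1) choose (k - 1)) / real (n choose k)"
    using finite_k_subsets k_subsets_nonempty[OF assms(3)]
      card_k_subsets_containing[OF assms(1,2)] card_k_subsets
    by (simp add: measure_pmf_of_set Int_def)
  also have "\<dots> = real k / real n"
  proof -
    have "k * (n choose k) = n * ((n - 1) choose (k - 1))"
      using times_binomial_minus1_eq assms by simp
    moreover have "(n choose k) > 0" using assms by simp
    ultimately show ?thesis using assms by (simp add: field_simps) (metis of_nat_mult)
  qed
  finally show ?thesis .
qed

text \<open>Union bound: a uniform k-set meets a fixed T with probability at most \<open>|T| k / n\<close>.\<close>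
lemma prob_k_subset_hits:
  assumes "T \<subseteq> {..<n}" "1 \<le> k" "k \<le> n"
  shows "measure_pmf.prob (pmf_of_set (k_subsets n k)) {S. S \<inter> T \<noteq> {}}
           \<le> real (card T) * real k / real n"
proof -
  have "finite T" using assms(1) finite_subset by blast
  have "{S. S \<inter> T \<noteq> {}} = (\<Union>i\<in>T. {S. i \<in> S})" by auto
  then have "measure_pmf.prob (pmf_of_set (k_subsets n k)) {S. S \<inter> T \<noteq> {}}
     \<le> (\<Sum>i\<in>T. measure_pmf.prob (pmf_of_set (k_subsets n k)) {S. i \<in> S})"
    using measure_pmf.finite_measure_subadditive_finite[OF \<open>finite T\<close>] by simp
  also have "\<dots> = (\<Sum>i\<in>T. real k / real n)"
    using prob_k_subset_contains assms by (intro sum.cong) auto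
  finally show ?thesis by simp
qed

lemma prob_flip_k_bad:
  assumes "T \<subseteq> {..<n}" "card T \<le> L" "k = 2 * L + 1" "k \<le> n"
    and G: "\<And>S. S \<in> k_subsets n k \<Longrightarrow> S \<inter> T = {} \<Longrightarrow> G (flip S x)"
  shows "measure_pmf.prob (flip_k n k x) {y. \<not> G y} \<le> 3 * real L ^ 2 / real n"
proof -
  let ?U = "pmf_of_set (k_subsets n k)"
  have "measure_pmf.prob (flip_k n k x) {y. \<not> G y}
      = measure_pmf.prob ?U ((\<lambda>S. flip S x) -` {y. \<not> G y} \<inter> set_pmf ?U)"
    by (simp add: flip_k_def measure_Int_set_pmf)
  also have "\<dots> \<le> measure_pmf.prob ?U {S. S \<inter> T \<noteq> {}}"
    using G finite_k_subsets k_subsets_nonempty[OF assms(4)]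
    by (intro measure_pmf.finite_measure_mono) auto
  also have "\<dots> \<le> real (card T) * real k / real n"
    using prob_k_subset_hits[OF assms(1) _ assms(4)] assms(3) by simp
  also have "\<dots> \<le> 3 * real L ^ 2 / real n"
  proof (intro divide_right_mono)
    have "real (card T) * real k \<le> real L * real k" using assms(2) by (intro mult_right_mono) auto
    also have "\<dots> \<le> 3 * real L ^ 2" using assms(3) by (cases "L = 0") (auto simp: power2_eq_square algebra_simps)
    finally show "real (card T) * real k \<le> 3 * real L ^ 2" .
  qed simp
  finally show ?thesis .
qed

definition ones :: "bool list \<Rightarrow> nat set" where
  "ones x = {i. i < length x \<and> x ! i}"

lemma weight_eq_card_ones: "weight x = card (ones x)"
  unfolding weight_def ones_def by (simp add: length_filter_conv_card)

lemma weight_le_length: "weight x \<le> length x"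
  by (simp add: weight_def)

lemma weight_flip:
  assumes "length x = n" "S \<in> k_subsets n k"
  shows "weight (flip S x) \<le> weight x + k"
    and "weight x - k \<le> weight (flip S x)"
    and "S \<inter> ones x = {} \<Longrightarrow> weight (flip S x) = weight x + k"
    and "S \<inter> ({..<n} - ones x) = {} \<Longrightarrow> weight (flip S x) = weight x - k"
proof -
  have S: "S \<subseteq> {..<n}" "card S = k" using assms by (auto simp: k_subsets_def)
  then have "finite S" using finite_subset by blast
  have "ones (flip S x) = (ones x - S) \<union> (S - ones x)"
    using assms S by (auto simp: ones_def)
  then have w: "weight (flip S x) = card (ones x - S) + card (S - ones x)"
    unfolding weight_eq_card_ones using \<open>finite S\<close>
    by (subst card_Un_disjoint[symmetric]) (auto simp: ones_def)
  have fin_ones: "finite (ones x)" by (simp add: ones_def)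
  show "weight (flip S x) \<le> weight x + k"
    using w S card_mono[OF fin_ones, of "ones x - S"] card_mono[OF \<open>finite S\<close>, of "S - ones x"]
    by (auto simp: weight_eq_card_ones)
  show "weight x - k \<le> weight (flip S x)"
    using w S diff_card_le_card_Diff[OF \<open>finite S\<close>, of "ones x"] by (auto simp: weight_eq_card_ones)
  show "S \<inter> ones x = {} \<Longrightarrow> weight (flip S x) = weight x + k"
    using w S by (simp add: Diff_triv Int_commute weight_eq_card_ones)
  assume "S \<inter> ({..<n} - ones x) = {}"
  then have "S \<subseteq> ones x" using S by auto
  then show "weight (flip S x) = weight x - k"
    using w S \<open>finite S\<close> by (simp add: card_Diff_subset weight_eq_card_ones)
qed

section \<open>The decoder\<close>

lemma jump_le_weight: "jump n L y \<le> real (weight y)"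
  by (simp add: jump_def)

lemma jump_nonzero: "jump n L y \<noteq> 0 \<Longrightarrow> jump n L y = real (weight y)"
  by (auto simp: jump_def split: if_splits)

lemma jump_middle: "L < weight y \<Longrightarrow> weight y < n - L \<Longrightarrow> jump n L y = real (weight y)"
  by (auto simp: jump_def)

text \<open>The output rule, a function of the observed values \<open>Jump(x) # Jump(y_1) # ...\<close> only:
  a nonzero \<open>Jump(x)\<close> is the answer; otherwise the samples lie in the lower or upper half,
  and the extreme visible value is shifted back by \<open>k = 2L+1\<close>.\<close>
definition decode :: "nat \<Rightarrow> nat \<Rightarrow> real list \<Rightarrow> nat" where
  "decode n L vs = (case vs of [] \<Rightarrow> 0 | v0 # rest \<Rightarrow>
     if v0 \<noteq> 0 then nat \<lfloor>v0\<rfloor>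
     else if Max (set rest) < real n / 2 then nat \<lfloor>Max (set rest)\<rfloor> - (2 * L + 1)
     else nat \<lfloor>Min (set rest - {0})\<rfloor> + (2 * L + 1))"

lemma decode_low_gap:
  assumes "length x = n" "weight x \<le> L" "6 * L + 2 < n" "k = 2 * L + 1"
    and ys: "set ys \<subseteq> set_pmf (flip_k n k x)"
    and good: "y \<in> set ys" "weight y = weight x + k"
  shows "decode n L (jump n L x # map (jump n L) ys) = weight x"
proof -
  define t where "t = weight x + k"
  have jump_x: "jump n L x = 0" using assms by (simp add: jump_def)
  have "k \<le> n" using assms by simp
  have upper: "v \<le> real t" if v: "v \<in> set (map (jump n L) ys)" for v
  proof -
    obtain y' where y': "y' \<in> set ys" "v = jump n L y'" using v by auto
    then obtain S where "S \<in> k_subsets n k" "y' = flip S x"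
      using set_pmf_flip_k[OF \<open>k \<le> n\<close>] ys y'(1) by blast
    then have "weight y' \<le> t" using weight_flip(1)[OF assms(1)] t_def by simp
    then show ?thesis using jump_le_weight[of n L y'] y' by simp
  qed
  have "L < weight y" "weight y < n - L" using good(2) assms by simp_all
  then have "jump n L y = real t" using jump_middle good(2) t_def by simp
  then have "real t \<in> set (map (jump n L) ys)" using good by force
  then have "Max (set (map (jump n L) ys)) = real t"
    using upper by (intro Max_eqI) auto
  moreover have "real t < real n / 2" using assms t_def by simp
  ultimately have "decode n L (jump n L x # map (jump n L) ys) = t - k"
    using jump_x assms(4) by (simp add: decode_def del: set_map)
  then show ?thesis by (simp add: t_def)
qed

lemma decode_high_gap:
  assumes "length x = n" "n - L \<le> weight x" "6 * L + 2 < n" "k = 2 * L + 1"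
    and ys: "set ys \<subseteq> set_pmf (flip_k n k x)"
    and good: "y \<in> set ys" "weight y = weight x - k"
  shows "decode n L (jump n L x # map (jump n L) ys) = weight x"
proof (cases "weight x = n")
  case True
  then show ?thesis using assms by (simp add: decode_def jump_def)
next
  case False
  define t where "t = weight x - k"
  have "weight x < n" using False weight_le_length[of x] assms(1) by simp
  then have jump_x: "jump n L x = 0" using assms by (auto simp: jump_def)
  have "k \<le> weight x" "k \<le> n" using assms by simp_all
  have lower: "real t \<le> v" if v: "v \<in> set (map (jump n L) ys) - {0}" for v
  proof -
    obtain y' where y': "y' \<in> set ys" "v = jump n L y'" "v \<noteq> 0" using v by auto
    then obtain S where "S \<in> k_subsets n k" "y' = flip S x"
      using set_pmf_flip_k[OF \<open>k \<le> n\<close>] ys y'(1) by blast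
    then have "t \<le> weight y'" using weight_flip(2)[OF assms(1)] t_def by simp
    then show ?thesis using jump_nonzero[of n L y'] y' by simp
  qed
  have "L < weight y" "weight y < n - L"
    using good(2) assms \<open>weight x < n\<close> \<open>k \<le> weight x\<close> by simp_all
  then have "jump n L y = real t" using jump_middle good(2) t_def by simp
  moreover have "real t \<noteq> 0" using assms \<open>k \<le> weight x\<close> t_def by simp
  ultimately have t_obs: "real t \<in> set (map (jump n L) ys) - {0}" using good by force
  then have "Min (set (map (jump n L) ys) - {0}) = real t"
    using lower by (intro Min_eqI) auto
  moreover have "\<not> Max (set (map (jump n L) ys)) < real n / 2"
  proof -
    have "real t \<le> Max (set (map (jump n L) ys))"
      using t_obs by (intro Max_ge_iff[THEN iffD2]) auto
    moreover have "real n / 2 \<le> real t" using assms \<open>k \<le> weight x\<close> t_def by simp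
    ultimately show ?thesis by simp
  qed
  ultimately have "decode n L (jump n L x # map (jump n L) ys) = t + k"
    using jump_x assms(4) by (simp add: decode_def del: set_map)
  then show ?thesis using \<open>k \<le> weight x\<close> by (simp add: t_def)
qed

lemma run_success_prob:
  assumes "6 * L + 2 < n" "x \<in> cube n"
  shows "pmf (run n L m (\<lambda>_. flip_k n (2 * L + 1)) (decode n L) x) (weight x)
           \<ge> 1 - (3 * real L ^ 2 / real n) ^ m"
proof -
  define k where "k = 2 * L + 1"
  define h where "h = (\<lambda>ys. decode n L (jump n L x # map (jump n L) ys))"
  have "length x = n" using assms by (simp add: cube_def)
  have "k \<le> n" using assms k_def by simp
  have run: "pmf (run n L m (\<lambda>_. flip_k n k) (decode n L) x) (weight x)
      = measure_pmf.prob (samples (\<lambda>_. flip_k n k x) m) (h -` {weight x})"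
    by (simp add: run_def h_def pmf_map)
  text \<open>In the gap cases it suffices that one sample flips only positions outside a set T
    of at most L positions; this is the common argument for both gaps.\<close>
  have from_avoidance: "measure_pmf.prob (samples (\<lambda>_. flip_k n k x) m) (h -` {weight x})
      \<ge> 1 - (3 * real L ^ 2 / real n) ^ m"
    if T: "T \<subseteq> {..<n}" "card T \<le> L"
      and G: "\<And>S. S \<in> k_subsets n k \<Longrightarrow> S \<inter> T = {} \<Longrightarrow> G (flip S x)"
      and correct: "\<And>ys y. set ys \<subseteq> set_pmf (flip_k n k x) \<Longrightarrow> y \<in> set ys \<Longrightarrow> G y
                       \<Longrightarrow> h ys = weight x"
    for T G
  proof (rule prob_samples_some_good)
    show "measure_pmf.prob (flip_k n k x) {y. \<not> G y} \<le> 3 * real L ^ 2 / real n"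
      by (rule prob_flip_k_bad[OF T k_def \<open>k \<le> n\<close>]) (rule G)
  qed (rule correct)
  consider "jump n L x \<noteq> 0" | "weight x \<le> L" | "n - L \<le> weight x"
    by (fastforce simp: jump_def split: if_splits)
  then have "measure_pmf.prob (samples (\<lambda>_. flip_k n k x) m) (h -` {weight x})
      \<ge> 1 - (3 * real L ^ 2 / real n) ^ m"
  proof cases
    case 1
    then have "h -` {weight x} = UNIV" by (auto simp: h_def decode_def dest: jump_nonzero)
    then show ?thesis by simp
  next
    case 2
    show ?thesis
    proof (rule from_avoidance[where G = "\<lambda>y. weight y = weight x + k"])
      show "ones x \<subseteq> {..<n}" using \<open>length x = n\<close> by (auto simp: ones_def)
      show "card (ones x) \<le> L" using 2 by (simp add: weight_eq_card_ones)
      show "weight (flip S x) = weight x + k" if "S \<in> k_subsets n k" "S \<inter> ones x = {}" for S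
        using weight_flip(3)[OF \<open>length x = n\<close> that] .
      show "h ys = weight x"
        if "set ys \<subseteq> set_pmf (flip_k n k x)" "y \<in> set ys" "weight y = weight x + k" for ys y
        unfolding h_def using decode_low_gap[OF \<open>length x = n\<close> 2 assms(1) k_def that] .
    qed
  next
    case 3
    show ?thesis
    proof (rule from_avoidance[where G = "\<lambda>y. weight y = weight x - k"])
      show "{..<n} - ones x \<subseteq> {..<n}" by blast
      have "ones x \<subseteq> {..<n}" using \<open>length x = n\<close> by (auto simp: ones_def)
      then have "card ({..<n} - ones x) = n - weight x"
        by (simp add: card_Diff_subset finite_subset weight_eq_card_ones)
      then show "card ({..<n} - ones x) \<le> L" using 3 by simp
      show "weight (flip S x) = weight x - k"
        if "S \<in> k_subsets n k" "S \<inter> ({..<n} - ones x) = {}" for S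
        using weight_flip(4)[OF \<open>length x = n\<close> that] .
      show "h ys = weight x"
        if "set ys \<subseteq> set_pmf (flip_k n k x)" "y \<in> set ys" "weight y = weight x - k" for ys y
        unfolding h_def using decode_high_gap[OF \<open>length x = n\<close> 3 assms(1) k_def that] .
    qed
  qed
  then show ?thesis using run k_def by simp
qed

section \<open>The failure probability is polynomially small\<close>

lemma failure_prob_bound:
  fixes \<epsilon> c C0 :: real and L n m :: nat
  assumes "\<epsilon> > 0" and m: "c \<le> 2 * \<epsilon> * real m"
    and n: "real n \<ge> (6 * \<bar>C0\<bar> + 3)^2" "n \<ge> 1"
    and L: "real L \<le> C0 * real n powr (1/2 - \<epsilon>)"
  shows "6 * L + 2 < n" and "(3 * real L ^ 2 / real n) ^ m \<le> (3 * C0^2)^m * real n powr (-c)"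
proof -
  let ?a = "1/2 - \<epsilon>"
  have n1: "real n \<ge> 1" using n by simp
  have L_sqrt: "real L \<le> \<bar>C0\<bar> * sqrt (real n)"
  proof -
    have "real n powr ?a \<le> sqrt (real n)"
      using powr_mono[of ?a "1/2" "real n"] \<open>\<epsilon> > 0\<close> n1 by (simp add: powr_half_sqrt)
    then have "C0 * real n powr ?a \<le> \<bar>C0\<bar> * sqrt (real n)"
      by (meson abs_ge_self abs_ge_zero order.trans mult_mono powr_ge_zero)
    then show ?thesis using L by linarith
  qed
  have s: "sqrt (real n) \<ge> 6 * \<bar>C0\<bar> + 3" using n(1) real_le_rsqrt by simp
  have "(6 * \<bar>C0\<bar> + 3) * sqrt (real n) \<le> sqrt (real n) * sqrt (real n)"
    using s by (intro mult_right_mono) auto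
  then have "6 * (\<bar>C0\<bar> * sqrt (real n)) + 3 * sqrt (real n) \<le> real n"
    by (simp add: algebra_simps)
  then show "6 * L + 2 < n" using L_sqrt s by simp
  have "3 * real L ^ 2 / real n \<le> 3 * C0^2 * real n powr (-2 * \<epsilon>)"
  proof -
    have "real L ^ 2 \<le> (C0 * real n powr ?a)^2" using L by (intro power_mono) auto
    also have "\<dots> = C0^2 * real n powr (2 * ?a)"
      using n1 powr_power[of "real n" ?a 2] by (simp add: power_mult_distrib)
    finally have "3 * real L ^ 2 / real n \<le> 3 * C0^2 * (real n powr (2 * ?a) / real n powr 1)"
      using n1 by (simp add: divide_right_mono)
    also have "real n powr (2 * ?a) / real n powr 1 = real n powr (-2 * \<epsilon>)"
      using powr_diff[of "real n" "2 * ?a" 1] by (simp add: algebra_simps)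
    finally show ?thesis .
  qed
  then have "(3 * real L ^ 2 / real n) ^ m \<le> (3 * C0^2 * real n powr (-2 * \<epsilon>)) ^ m"
    by (intro power_mono) auto
  also have "\<dots> = (3 * C0^2)^m * real n powr (real m * (-2 * \<epsilon>))"
    using n1 by (simp add: power_mult_distrib powr_power)
  also have "\<dots> \<le> (3 * C0^2)^m * real n powr (-c)"
    using m n1 by (intro mult_left_mono powr_mono) (auto simp: mult.commute)
  finally show "(3 * real L ^ 2 / real n) ^ m \<le> (3 * C0^2)^m * real n powr (-c)" .
qed

theorem lemma3:
  fixes \<epsilon> c :: real
  assumes "\<epsilon> > 0" and "c > 0"
  shows "\<exists>m::nat. \<forall>(C0::real) (l::nat \<Rightarrow> nat).
           (\<forall>n\<ge>1. real (l n) \<le> C0 * real n powr (1/2 - \<epsilon>)) \<longrightarrow>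
           (\<exists>K::real. \<exists>N::nat. \<forall>n\<ge>N.
              \<exists>(D::nat \<Rightarrow> bool list \<Rightarrow> bool list pmf) (g::real list \<Rightarrow> nat).
                (\<forall>i<m. unary_unbiased n (D i)) \<and>
                (\<forall>x\<in>cube n. pmf (run n (l n) m D g x) (weight x) \<ge> 1 - K * real n powr (- c)))"
proof -
  define m :: nat where "m = nat \<lceil>c / (2 * \<epsilon>)\<rceil>"
  have "c / (2 * \<epsilon>) \<le> real m" unfolding m_def by linarith
  then have m_large: "c \<le> 2 * \<epsilon> * real m"
    using \<open>\<epsilon> > 0\<close> by (simp add: pos_divide_le_eq mult.commute)
  show ?thesis
  proof (intro exI[of _ m] allI impI)
    fix C0 :: real and l :: "nat \<Rightarrow> nat"
    assume l: "\<forall>n\<ge>1. real (l n) \<le> C0 * real n powr (1/2 - \<epsilon>)"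
    show "\<exists>K N. \<forall>n\<ge>N. \<exists>D g. (\<forall>i<m. unary_unbiased n (D i)) \<and>
           (\<forall>x\<in>cube n. pmf (run n (l n) m D g x) (weight x) \<ge> 1 - K * real n powr (- c))"
    proof (intro exI[of _ "(3 * C0^2)^m"] exI[of _ "nat \<lceil>(6 * \<bar>C0\<bar> + 3)^2\<rceil> + 1"] allI impI)
      fix n assume "n \<ge> nat \<lceil>(6 * \<bar>C0\<bar> + 3)^2\<rceil> + 1"
      then have n: "real n \<ge> (6 * \<bar>C0\<bar> + 3)^2" "n \<ge> 1" by linarith+
      note bound = failure_prob_bound[OF \<open>\<epsilon> > 0\<close> m_large n l[rule_format, OF n(2)]]
      have "unary_unbiased n (flip_k n (2 * l n + 1))"
        using bound(1) by (intro flip_k_unary_unbiased) simp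
      moreover have "pmf (run n (l n) m (\<lambda>_. flip_k n (2 * l n + 1)) (decode n (l n)) x) (weight x)
          \<ge> 1 - (3 * C0^2)^m * real n powr (- c)" if "x \<in> cube n" for x
        using run_success_prob[OF bound(1) that, of m] bound(2) by linarith
      ultimately show "\<exists>D g. (\<forall>i<m. unary_unbiased n (D i)) \<and>
           (\<forall>x\<in>cube n. pmf (run n (l n) m D g x) (weight x) \<ge> 1 - (3 * C0^2)^m * real n powr (- c))"
        by (intro exI[of _ "\<lambda>_. flip_k n (2 * l n + 1)"] exI[of _ "decode n (l n)"]) blast
    qed
  qed
qed

end
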